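(* Let $\mathbf{k}$ be a commutative ring, $\lambda\in\mathbf{k}$ and $X$ a set. With $m$ the product $\diamond$, $u:\mathbf{k}\to\mathbf{k}\mathcal{F}_X^a$, $1\mapsto\bullet$, the angular coproduct $\Delta_a$, and $\epsilon_a:\mathbf{k}\mathcal{F}_X^a\to\mathbf{k}$ given by $\epsilon_a(\bullet)=1$ and $\epsilon_a(F)=0$ for every $F\in\mathcal{F}_X^a$ with $F\neq\bullet$, the quintuple $(\mathbf{k}\mathcal{F}_X^a,m,u,\Delta_a,\epsilon_a)$ is a bialgebra.
   Context: Angularly decorated forests. The set $\mathcal{F}_X^a$ of angularly decorated (planar rooted) forests and its subset of angularly decorated trees are defined recursively: the one-vertex tree $\bullet$ is a tree; if $T_1,\dots,T_k$ ($k\ge1$) are trees and $x_1,\dots,x_{k-1}\in X$, then the word $T_1x_1T_2x_2\cdots x_{k-1}T_k$ is a forest (for $k=1$ it is the tree $T_1$); and if $F=T_1x_1\cdots x_{k-1}T_k$ is a forest, then $B^+(F)$ is a tree, namely the planar tree obtained by adding a new root joined by edges to the roots of $T_1,\dots,T_k$ (in this order), the decoration $x_i$ sitting in the angle between the $i$-th and $(i+1)$-th children. The depth of a tree is the maximal length of a path from root to a leaf; the depth of a forest is the maximum depth of its trees. $\mathbf{k}\mathcal{F}_X^a$ is the free $\mathbf{k}$-module on $\mathcal{F}_X^a$; $B^+$ is extended linearly. Product. The bilinear product $\diamond$ is defined by recursion on the sum of depths: for trees, $\bullet\diamond\bullet=\bullet$, $T\diamond\bullet=T$, $\bullet\diamond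 T=T$, and $B^+(\overline{T})\diamond B^+(\overline{T'})=B^+\big(B^+(\overline{T})\diamond\overline{T'}\big)+B^+\big(\overline{T}\diamond B^+(\overline{T'})\big)+\lambda B^+\big(\overline{T}\diamond\overline{T'}\big)$; for forests $T=T_1x_1\cdots x_{m-1}T_m$ and $T'=T'_1y_1\cdots y_{n-1}T'_n$, $T\diamond T'=T_1x_1\cdots x_{m-1}(T_m\diamond T'_1)y_1T'_2\cdots y_{n-1}T'_n$, extended linearly in the middle factor. This makes $\mathbf{k}\mathcal{F}_X^a$ an associative algebra with unit $\bullet$, and $B^+$ a Rota–Baxter operator of weight $\lambda$. Coproduct. Let $F\in\mathcal{F}_X^a$. A non-leaf vertex is a vertex with at least one child. For a non-leaf vertex $v$, the rooted subtree $F_v$ consists of $v$, its descendants, the edges between them and all decorations in angles between children of its vertices. A decoration occurrence is an occurrence of a letter of $X$ in $F$. An admissible subforest $H$ of $F$ is a finite (possibly empty) set of pieces, each a rooted subtree $F_v$ ($v$ non-leaf) or a single decoration occurrence, pairwise disjoint (no shared vertices among chosen rooted subtrees, no chosen decoration inside a chosen rooted subtree), listed left to right as $H_1,\dots,H_n$. Its closure is $\mathrm{cl}(H)=\widehat{H_1}\diamond\cdots\diamond\widehat{H_n}$ with $\widehat{H_i}=H_i$ for a rooted subtree and $\widehat{H_i}=\bullet x\bullet$ for an occurrence of $x$; $\mathrm{cl}(\emptyset)=\bullet$. The quotient $F/H$ is obtained by replacing each chosen rooted subtree by a leaf $\bullet$ and each chosen decoration occurrence by a symbol $\star$, then evaluating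 recursively: a word $T_1s_1\cdots s_{k-1}T_k$ ($s_i\in X\cup\{\star\}$) evaluates to $\overline{T_1}\diamond c(s_1)\diamond\cdots\diamond c(s_{k-1})\diamond\overline{T_k}$ with $c(x)=\bullet x\bullet$, $c(\star)=\bullet$, $\overline{\bullet}=\bullet$, $\overline{B^+(W)}=B^+(\text{value of }W)$. The angular coproduct is $\Delta_a(F)=\sum_H\mathrm{cl}(H)\otimes F/H$ over all admissible subforests $H$, extended linearly. *)

theory Defs
  imports Main "HOL-Library.Poly_Mapping"
begin

text \<open>The free k-module on a set A is modelled as A =>0 k (finitely supported
functions).  Scalar multiplication and linear extension of a map given on basis
elements.\<close>

definition smul :: "'k::comm_ring_1 \<Rightarrow> ('a \<Rightarrow>\<^sub>0 'k) \<Rightarrow> ('a \<Rightarrow>\<^sub>0 'k)" where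
  "smul c p = Poly_Mapping.map (\<lambda>a. c * a) p"

definition lin :: "('a \<Rightarrow> ('b \<Rightarrow>\<^sub>0 'k::comm_ring_1)) \<Rightarrow> ('a \<Rightarrow>\<^sub>0 'k) \<Rightarrow> ('b \<Rightarrow>\<^sub>0 'k)" where
  "lin f p = (\<Sum>a\<in>Poly_Mapping.keys p. smul (Poly_Mapping.lookup p a) (f a))"

definition lmap :: "('a \<Rightarrow> 'b) \<Rightarrow> ('a \<Rightarrow>\<^sub>0 'k::comm_ring_1) \<Rightarrow> ('b \<Rightarrow>\<^sub>0 'k)" where
  "lmap f p = lin (\<lambda>a. Poly_Mapping.single (f a) 1) p"

definition lfun :: "('a \<Rightarrow> 'k::comm_ring_1) \<Rightarrow> ('a \<Rightarrow>\<^sub>0 'k) \<Rightarrow> 'k" where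
  "lfun f p = (\<Sum>a\<in>Poly_Mapping.keys p. Poly_Mapping.lookup p a * f a)"

text \<open>Tensor products of free modules: k A (x) k B = k (A x B).\<close>

definition tens :: "('a \<Rightarrow>\<^sub>0 'k::comm_ring_1) \<Rightarrow> ('b \<Rightarrow>\<^sub>0 'k) \<Rightarrow> ('a \<times> 'b \<Rightarrow>\<^sub>0 'k)" where
  "tens p q = lin (\<lambda>a. lin (\<lambda>b. Poly_Mapping.single (a, b) 1) q) p"

text \<open>mult a b : product of basis elements, e : the unit element (image of 1 under u),
cop a : coproduct of a basis element, eps a : counit of a basis element.
All maps are extended linearly.\<close>

definition bialgebra ::
  "('a \<Rightarrow> 'a \<Rightarrow> ('a \<Rightarrow>\<^sub>0 'k::comm_ring_1)) \<Rightarrow> ('a \<Rightarrow>\<^sub>0 'k) \<Rightarrow> ('a \<Rightarrow> ('a \<times> 'a \<Rightarrow>\<^sub>0 'k))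
    \<Rightarrow> ('a \<Rightarrow> 'k) \<Rightarrow> bool" where
  "bialgebra mult e cop eps \<longleftrightarrow>
    (let m = (\<lambda>p q. lin (\<lambda>a. lin (\<lambda>b. mult a b) q) p);
         D = lin cop;
         \<epsilon> = lfun eps;
         m2 = (\<lambda>P Q. lin (\<lambda>(a, b). lin (\<lambda>(c, d). tens (m (Poly_Mapping.single a 1) (Poly_Mapping.single c 1))
                                                    (m (Poly_Mapping.single b 1) (Poly_Mapping.single d 1))) Q) P)
     in
      \<comment> \<open>associativity\<close>
      (\<forall>p q r. m (m p q) r = m p (m q r)) \<and>
      \<comment> \<open>unit\<close>
      (\<forall>p. m e p = p \<and> m p e = p) \<and>
      \<comment> \<open>coassociativity: (D (x) id) o D = (id (x) D) o D\<close>
      (\<forall>p. lin (\<lambda>(a, b). lin (\<lambda>(a1, a2). Poly_Mapping.single (a1, a2, b) 1) (cop a)) (D p)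
         = lin (\<lambda>(a, b). lin (\<lambda>(b1, b2). Poly_Mapping.single (a, b1, b2) 1) (cop b)) (D p)) \<and>
      \<comment> \<open>counit: (eps (x) id) o D = id = (id (x) eps) o D\<close>
      (\<forall>p. lin (\<lambda>(a, b). smul (eps a) (Poly_Mapping.single b 1)) (D p) = p \<and>
           lin (\<lambda>(a, b). smul (eps b) (Poly_Mapping.single a 1)) (D p) = p) \<and>
      \<comment> \<open>D and eps are algebra homomorphisms\<close>
      (\<forall>p q. D (m p q) = m2 (D p) (D q)) \<and>
      D e = tens e e \<and>
      (\<forall>p q. \<epsilon> (m p q) = \<epsilon> p * \<epsilon> q) \<and>
      \<epsilon> e = 1)"

text \<open>A tree is either the one-vertex tree Dot or B+(F) for a forest F.
A forest T1 x1 T2 ... x(k-1) Tk is One T1 (k = 1) or More T1 x1 (T2 x2 ... Tk).\<close>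

datatype 'x tree = Dot | Bp "'x forest"
     and 'x forest = One "'x tree" | More "'x tree" 'x "'x forest"

fun firstT :: "'x forest \<Rightarrow> 'x tree" where
  "firstT (One t) = t"
| "firstT (More t x F) = t"

fun lastT :: "'x forest \<Rightarrow> 'x tree" where
  "lastT (One t) = t"
| "lastT (More t x F) = lastT F"

text \<open>splice F s G: the forest T1 x1 ... x(m-1) s y1 T'2 ... y(n-1) T'n where
F = T1 x1 ... Tm and G = T'1 y1 ... T'n.\<close>

fun restF :: "'x tree \<Rightarrow> 'x forest \<Rightarrow> 'x forest" where
  "restF s (One t) = One s"
| "restF s (More t y G) = More s y G"

fun splice :: "'x forest \<Rightarrow> 'x tree \<Rightarrow> 'x forest \<Rightarrow> 'x forest" where
  "splice (One t) s G = restF s G"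
| "splice (More t x F) s G = More t x (splice F s G)"

lemma size_firstT: "size (firstT F) \<le> size F"
  by (cases F) auto

lemma size_lastT: "size (lastT F) \<le> size F"
  by (induction F rule: lastT.induct) auto

lemma size_lastT_firstT: "size (lastT F) + size (firstT G) < Suc (Suc (size F + size G))"
  using size_firstT[of G] size_lastT[of F] by linarith

function tprod :: "'k::comm_ring_1 \<Rightarrow> 'x tree \<Rightarrow> 'x tree \<Rightarrow> ('x tree \<Rightarrow>\<^sub>0 'k)" where
  "tprod lam Dot t = Poly_Mapping.single t 1"
| "tprod lam (Bp F) Dot = Poly_Mapping.single (Bp F) 1"
| "tprod lam (Bp F) (Bp G) =
     lmap (\<lambda>s. Bp (splice (One (Bp F)) s G)) (tprod lam (Bp F) (firstT G))
   + lmap (\<lambda>s. Bp (splice F s (One (Bp G)))) (tprod lam (lastT F) (Bp G))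
   + smul lam (lmap (\<lambda>s. Bp (splice F s G)) (tprod lam (lastT F) (firstT G)))"
  by pat_completeness auto
termination
  by (relation "measure (\<lambda>(l, a, b). size a + size b)")
     (simp_all add: le_imp_less_Suc add_mono size_firstT size_lastT add_le_less_mono add_less_le_mono size_lastT_firstT)

definition fprod :: "'k::comm_ring_1 \<Rightarrow> 'x forest \<Rightarrow> 'x forest \<Rightarrow> ('x forest \<Rightarrow>\<^sub>0 'k)" where
  "fprod lam F G = lmap (\<lambda>s. splice F s G) (tprod lam (lastT F) (firstT G))"

definition diam :: "'k::comm_ring_1 \<Rightarrow> ('x forest \<Rightarrow>\<^sub>0 'k) \<Rightarrow> ('x forest \<Rightarrow>\<^sub>0 'k) \<Rightarrow> ('x forest \<Rightarrow>\<^sub>0 'k)" where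
  "diam lam p q = lin (\<lambda>F. lin (\<lambda>G. fprod lam F G) q) p"

abbreviation bul :: "'x forest" where
  "bul \<equiv> One Dot"

text \<open>Pieces of an admissible subforest: a rooted subtree (at a non-leaf vertex),
or a decoration occurrence.\<close>

datatype 'x piece = PTree "'x tree" | PDec 'x

text \<open>Marked words: a forest in which chosen subtrees are replaced by leaves and
chosen decoration occurrences by a star (None).\<close>

datatype 'x mtree = MDot | MB "'x mforest"
     and 'x mforest = MOne "'x mtree" | MMore "'x mtree" "'x option" "'x mforest"

fun hat :: "'x piece \<Rightarrow> 'x forest" where
  "hat (PTree t) = One t"
| "hat (PDec x) = More Dot x (One Dot)"

definition cl :: "'k::comm_ring_1 \<Rightarrow> 'x piece list \<Rightarrow> ('x forest \<Rightarrow>\<^sub>0 'k)" where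
  "cl lam hs = foldr (\<lambda>h acc. diam lam (Poly_Mapping.single (hat h) 1) acc) hs (Poly_Mapping.single bul 1)"

fun cdec :: "'x option \<Rightarrow> 'x forest" where
  "cdec None = bul"
| "cdec (Some x) = More Dot x (One Dot)"

fun evalT :: "'k::comm_ring_1 \<Rightarrow> 'x mtree \<Rightarrow> ('x tree \<Rightarrow>\<^sub>0 'k)"
and evalF :: "'k::comm_ring_1 \<Rightarrow> 'x mforest \<Rightarrow> ('x forest \<Rightarrow>\<^sub>0 'k)" where
  "evalT lam MDot = Poly_Mapping.single Dot 1"
| "evalT lam (MB W) = lmap Bp (evalF lam W)"
| "evalF lam (MOne t) = lmap One (evalT lam t)"
| "evalF lam (MMore t s W) =
     diam lam (lmap One (evalT lam t)) (diam lam (Poly_Mapping.single (cdec s) 1) (evalF lam W))"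

text \<open>Enumeration of all admissible subforests H, each given as the list of its
pieces (left to right) together with the marked word defining F/H.\<close>

fun admT :: "'x tree \<Rightarrow> ('x piece list \<times> 'x mtree) list"
and admF :: "'x forest \<Rightarrow> ('x piece list \<times> 'x mforest) list" where
  "admT Dot = [([], MDot)]"
| "admT (Bp F) = ([PTree (Bp F)], MDot) # map (\<lambda>(h, w). (h, MB w)) (admF F)"
| "admF (One t) = map (\<lambda>(h, w). (h, MOne w)) (admT t)"
| "admF (More t x F) =
     concat (map (\<lambda>(h1, w1). concat (map (\<lambda>(hx, s). map (\<lambda>(h2, w2). (h1 @ hx @ h2, MMore w1 s w2)) (admF F))
        [([], Some x), ([PDec x], None)])) (admT t))"

definition coprod_a :: "'k::comm_ring_1 \<Rightarrow> 'x forest \<Rightarrow> ('x forest \<times> 'x forest \<Rightarrow>\<^sub>0 'k)" where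
  "coprod_a lam F = sum_list (map (\<lambda>(h, w). tens (cl lam h) (evalF lam w)) (admF F))"

definition eps_a :: "'x forest \<Rightarrow> 'k::comm_ring_1" where
  "eps_a F = (if F = bul then 1 else 0)"

end

theory Submission
  imports Defs
begin

text \<open>
  All structure maps are linear extensions of maps on forests, so every axiom reduces to
  basis forests, where it is proved by induction on size.  The product only concatenates across a decoration,
  (S x P) \<diamond> Q = S x (P \<diamond> Q), and on planted trees B+ is a Rota--Baxter operator of
  weight \<lambda>.  The coproduct factors over decorations, which are primitive,
  \<Delta>(T x F) = \<Delta>(T) (\<bullet> \<otimes> x + x \<otimes> \<bullet>) \<Delta>(F), and B+ is a 1-cocycle,
  \<Delta>(B+ F) = B+ F \<otimes> \<bullet> + (id \<otimes> B+) \<Delta>(F).  Since id \<otimes> B+ is again a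
  Rota--Baxter operator of weight \<lambda> on the tensor square, multiplicativity of \<Delta> on two
  planted trees reduces to multiplicativity on smaller forests.  Associativity, the counit
  laws and coassociativity follow the same pattern with simpler bookkeeping.
\<close>

section \<open>Linear maps between free modules\<close>

abbreviation bvec :: "'a \<Rightarrow> ('a \<Rightarrow>\<^sub>0 'k::comm_ring_1)" where
  "bvec a \<equiv> Poly_Mapping.single a 1"

lemma lookup_smul [simp]: "Poly_Mapping.lookup (smul c p) a = c * Poly_Mapping.lookup p a"
  unfolding smul_def by transfer (auto simp: when_def)

lemma smul_add_right: "smul c (p + q) = smul c p + smul c q"
  by (rule poly_mapping_eqI) (simp add: lookup_add algebra_simps)

lemma smul_add_left: "smul (c + d) p = smul c p + smul d p"
  by (rule poly_mapping_eqI) (simp add: lookup_add algebra_simps)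

lemma smul_zero_left [simp]: "smul 0 p = 0"
  by (rule poly_mapping_eqI) simp

lemma smul_zero_right [simp]: "smul c 0 = 0"
  by (rule poly_mapping_eqI) simp

lemma smul_one [simp]: "smul 1 p = p"
  by (rule poly_mapping_eqI) simp

lemma smul_smul [simp]: "smul c (smul d p) = smul (c * d) p"
  by (rule poly_mapping_eqI) (simp add: algebra_simps)

lemma smul_single [simp]: "smul c (Poly_Mapping.single a d) = Poly_Mapping.single a (c * d)"
  by (rule poly_mapping_eqI) (simp add: lookup_single when_def)

lemma smul_sum_right: "smul c (sum f S) = (\<Sum>x\<in>S. smul c (f x))"
  by (induction S rule: infinite_finite_induct) (auto simp: smul_add_right)

lemma smul_sum_left: "smul (sum g S) q = (\<Sum>x\<in>S. smul (g x) q)"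
  by (induction S rule: infinite_finite_induct) (auto simp: smul_add_left)

lemma lin_eq_sum_superset:
  assumes "finite S" "Poly_Mapping.keys p \<subseteq> S"
  shows "lin f p = (\<Sum>a\<in>S. smul (Poly_Mapping.lookup p a) (f a))"
  unfolding lin_def
  by (rule sum.mono_neutral_left) (use assms in \<open>auto simp: in_keys_iff\<close>)

lemma lin_add [simp]: "lin f (p + q) = lin f p + lin f q"
proof -
  have S: "finite (Poly_Mapping.keys p \<union> Poly_Mapping.keys q)"
    "Poly_Mapping.keys (p + q) \<subseteq> Poly_Mapping.keys p \<union> Poly_Mapping.keys q"
    by (auto simp: keys_add)
  show ?thesis
    by (subst (1 2 3) lin_eq_sum_superset[OF S(1)])
       (use S in \<open>auto simp: lookup_add smul_add_left sum.distrib\<close>)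
qed

lemma lin_smul [simp]: "lin f (smul c p) = smul c (lin f p)"
proof -
  have S: "finite (Poly_Mapping.keys p)" "Poly_Mapping.keys (smul c p) \<subseteq> Poly_Mapping.keys p"
    by (auto simp: in_keys_iff)
  show ?thesis
    by (subst (1 2) lin_eq_sum_superset[OF S(1)]) (use S in \<open>auto simp: smul_sum_right\<close>)
qed

lemma lin_zero [simp]: "lin f 0 = 0"
  by (simp add: lin_def)

lemma lin_single [simp]: "lin f (Poly_Mapping.single a c) = smul c (f a)"
  by (cases "c = 0") (simp_all add: lin_def)

lemma lin_add_fun: "lin (\<lambda>a. f a + g a) p = lin f p + lin g p"
  by (simp add: lin_def smul_add_right sum.distrib)

lemma lin_smul_fun: "lin (\<lambda>a. smul c (f a)) p = smul c (lin f p)"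
  by (simp add: lin_def smul_sum_right mult.commute)

lemma lin_zero_fun [simp]: "lin (\<lambda>a. 0) p = 0"
  by (simp add: lin_def)

lemma lin_smul_const: "lin (\<lambda>a. smul (f a) q) p = smul (lfun f p) q"
  by (simp add: lin_def lfun_def smul_sum_left)

lemma poly_mapping_basis_expansion:
  "p = (\<Sum>a\<in>Poly_Mapping.keys p. smul (Poly_Mapping.lookup p a) (bvec a))"
  by (rule poly_mapping_eqI) (simp add: lookup_sum lookup_single when_def in_keys_iff)

lemma lin_bvec [simp]: "lin bvec p = p"
  unfolding lin_def by (rule poly_mapping_basis_expansion[symmetric])

definition is_linear :: "(('a \<Rightarrow>\<^sub>0 'k::comm_ring_1) \<Rightarrow> ('b \<Rightarrow>\<^sub>0 'k)) \<Rightarrow> bool" where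
  "is_linear f \<longleftrightarrow> (\<forall>p q. f (p + q) = f p + f q) \<and> (\<forall>c p. f (smul c p) = smul c (f p))"

lemma is_linear_add: "is_linear f \<Longrightarrow> f (p + q) = f p + f q"
  and is_linear_smul: "is_linear f \<Longrightarrow> f (smul c p) = smul c (f p)"
  by (auto simp: is_linear_def)

lemma is_linear_zero: "is_linear f \<Longrightarrow> f 0 = 0"
  by (metis is_linear_smul smul_zero_left)

lemma is_linear_sum:
  assumes "is_linear f"
  shows "f (sum g S) = (\<Sum>x\<in>S. f (g x))"
  by (induction S rule: infinite_finite_induct)
     (simp_all add: is_linear_zero[OF assms] is_linear_add[OF assms])

lemma is_linear_sum_list: "is_linear f \<Longrightarrow> f (sum_list xs) = sum_list (map f xs)"
  by (induction xs) (auto simp: is_linear_zero is_linear_add)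

lemma sum_list_concat: "sum_list (concat xss) = sum_list (map sum_list xss)"
  by (induction xss) auto

lemma is_linear_eq_lin:
  assumes "is_linear f"
  shows "f p = lin (\<lambda>a. f (bvec a)) p"
proof -
  have "f p = f (\<Sum>a\<in>Poly_Mapping.keys p. smul (Poly_Mapping.lookup p a) (bvec a))"
    using poly_mapping_basis_expansion[of p] by (rule arg_cong)
  also have "\<dots> = lin (\<lambda>a. f (bvec a)) p"
    unfolding lin_def is_linear_sum[OF assms] is_linear_smul[OF assms] ..
  finally show ?thesis .
qed

lemma is_linear_eqI:
  assumes "is_linear f" "is_linear g" "\<And>a. f (bvec a) = g (bvec a)"
  shows "f p = g p"
  using is_linear_eq_lin[OF assms(1), of p] is_linear_eq_lin[OF assms(2), of p] assms(3) by simp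

lemma bilinear_eqI:
  assumes "\<And>q. is_linear (\<lambda>p. L p q)" "\<And>q. is_linear (\<lambda>p. R p q)"
    and "\<And>a. is_linear (L (bvec a))" "\<And>a. is_linear (R (bvec a))"
    and "\<And>a b. L (bvec a) (bvec b) = R (bvec a) (bvec b)"
  shows "L p q = R p q"
proof -
  have "L (bvec a) q = R (bvec a) q" for a
    by (rule is_linear_eqI[OF assms(3) assms(4)]) (rule assms(5))
  then show ?thesis
    by (rule is_linear_eqI[where f = "\<lambda>p. L p q" and g = "\<lambda>p. R p q", OF assms(1) assms(2)])
qed

named_theorems linear_intros

lemma is_linear_id [linear_intros]: "is_linear (\<lambda>p. p)"
  by (simp add: is_linear_def)

lemma is_linear_zero_fun [linear_intros]: "is_linear (\<lambda>p. 0)"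
  by (simp add: is_linear_def)

lemma is_linear_add_fun [linear_intros]: "is_linear f \<Longrightarrow> is_linear g \<Longrightarrow> is_linear (\<lambda>p. f p + g p)"
  by (simp add: is_linear_def smul_add_right)

lemma is_linear_smul_fun [linear_intros]: "is_linear f \<Longrightarrow> is_linear (\<lambda>p. smul c (f p))"
  by (simp add: is_linear_def mult.commute smul_add_right)

lemma is_linear_lin [linear_intros]: "is_linear f \<Longrightarrow> is_linear (\<lambda>p. lin g (f p))"
  by (simp add: is_linear_def)

lemma is_linear_lin_fun [linear_intros]:
  "(\<And>a. is_linear (G a)) \<Longrightarrow> is_linear f \<Longrightarrow> is_linear (\<lambda>p. lin (\<lambda>a. G a (f p)) q)"
  by (simp add: is_linear_def lin_add_fun lin_smul_fun)

lemma is_linear_comp: "is_linear g \<Longrightarrow> is_linear f \<Longrightarrow> is_linear (\<lambda>a. g (f a))"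
  by (simp add: is_linear_def)

lemma lin_lin: "lin h (lin g p) = lin (\<lambda>a. lin h (g a)) p"
  by (rule is_linear_eqI[where f = "\<lambda>p. lin h (lin g p)"]) (auto intro!: linear_intros)

lemma lin_comp:
  assumes "is_linear g"
  shows "lin (\<lambda>a. g (f a)) p = g (lin f p)"
proof (rule is_linear_eqI[where f = "\<lambda>p. lin (\<lambda>a. g (f a)) p"])
  show "is_linear (\<lambda>p. g (lin f p))"
    by (rule is_linear_comp[OF assms is_linear_lin[OF is_linear_id]])
qed (auto intro: linear_intros)

lemma lmap_single [simp]: "lmap f (Poly_Mapping.single a c) = Poly_Mapping.single (f a) c"
  by (simp add: lmap_def)

lemma lmap_add [simp]: "lmap f (p + q) = lmap f p + lmap f q"
  by (simp add: lmap_def)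

lemma lmap_smul [simp]: "lmap f (smul c p) = smul c (lmap f p)"
  by (simp add: lmap_def)

lemma lmap_lmap [simp]: "lmap f (lmap g p) = lmap (\<lambda>a. f (g a)) p"
  by (simp add: lmap_def lin_lin)

lemma lin_lmap [simp]: "lin h (lmap g p) = lin (\<lambda>a. h (g a)) p"
  by (simp add: lmap_def lin_lin)

lemma is_linear_lmap [linear_intros]: "is_linear f \<Longrightarrow> is_linear (\<lambda>p. lmap g (f p))"
  unfolding lmap_def by (rule linear_intros)

lemma lfun_eq_sum_superset:
  assumes "finite S" "Poly_Mapping.keys p \<subseteq> S"
  shows "lfun f p = (\<Sum>a\<in>S. Poly_Mapping.lookup p a * f a)"
  unfolding lfun_def
  by (rule sum.mono_neutral_left) (use assms in \<open>auto simp: in_keys_iff\<close>)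

lemma lfun_add [simp]: "lfun f (p + q) = lfun f p + lfun f q"
proof -
  have S: "finite (Poly_Mapping.keys p \<union> Poly_Mapping.keys q)"
    "Poly_Mapping.keys (p + q) \<subseteq> Poly_Mapping.keys p \<union> Poly_Mapping.keys q"
    by (auto simp: keys_add)
  show ?thesis
    by (subst (1 2 3) lfun_eq_sum_superset[OF S(1)])
       (use S in \<open>auto simp: lookup_add algebra_simps sum.distrib\<close>)
qed

lemma lfun_smul [simp]: "lfun f (smul c p) = c * lfun f p"
proof -
  have S: "finite (Poly_Mapping.keys p)" "Poly_Mapping.keys (smul c p) \<subseteq> Poly_Mapping.keys p"
    by (auto simp: in_keys_iff)
  show ?thesis
    by (subst (1 2) lfun_eq_sum_superset[OF S(1)])
       (use S in \<open>auto simp: sum_distrib_left algebra_simps\<close>)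
qed

lemma lfun_single [simp]: "lfun f (Poly_Mapping.single a c) = c * f a"
  by (cases "c = 0") (simp_all add: lfun_def)

lemma lfun_zero [simp]: "lfun f 0 = 0"
  by (simp add: lfun_def)

lemma lfun_zero_fun [simp]: "lfun (\<lambda>a. 0) p = 0"
  by (simp add: lfun_def)

lemma lfun_sum: "lfun f (sum g S) = (\<Sum>x\<in>S. lfun f (g x))"
  by (induction S rule: infinite_finite_induct) auto

lemma lfun_lin: "lfun f (lin g p) = lfun (\<lambda>a. lfun f (g a)) p"
  by (simp add: lin_def lfun_sum) (simp add: lfun_def mult.commute)

lemma lfun_lmap [simp]: "lfun f (lmap g p) = lfun (\<lambda>a. f (g a)) p"
  by (simp add: lmap_def lfun_lin)

lemma lfun_mult_const_left: "lfun (\<lambda>a. c * f a) p = c * lfun f p"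
  unfolding lfun_def sum_distrib_left by (simp add: ac_simps)

lemma lfun_mult_const_right: "lfun (\<lambda>a. f a * c) p = lfun f p * c"
  unfolding lfun_def sum_distrib_right by (simp add: ac_simps)


lemma tens_single [simp]:
  "tens (Poly_Mapping.single a c) (Poly_Mapping.single b d) = Poly_Mapping.single (a, b) (c * d)"
  by (simp add: tens_def)

lemma tens_add_left [simp]: "tens (p + p') q = tens p q + tens p' q"
  by (simp add: tens_def)

lemma tens_add_right [simp]: "tens p (q + q') = tens p q + tens p q'"
  by (simp add: tens_def lin_add_fun)

lemma tens_smul_left [simp]: "tens (smul c p) q = smul c (tens p q)"
  by (simp add: tens_def)

lemma tens_smul_right [simp]: "tens p (smul c q) = smul c (tens p q)"
  by (simp add: tens_def lin_smul_fun)

lemma is_linear_tens_left [linear_intros]: "is_linear f \<Longrightarrow> is_linear (\<lambda>p. tens (f p) q)"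
  by (simp add: is_linear_def)

lemma is_linear_tens_right [linear_intros]: "is_linear f \<Longrightarrow> is_linear (\<lambda>p. tens q (f p))"
  by (simp add: is_linear_def)

lemma tens_bvec_left: "tens (bvec a) W = lin (\<lambda>(b1, b2). bvec (a, b1, b2)) W"
  by (rule is_linear_eqI[where f = "\<lambda>W. tens (bvec a) W"]) (auto intro!: linear_intros)

definition is_bilinear :: "(('a \<Rightarrow>\<^sub>0 'k::comm_ring_1) \<Rightarrow> ('b \<Rightarrow>\<^sub>0 'k) \<Rightarrow> ('c \<Rightarrow>\<^sub>0 'k)) \<Rightarrow> bool" where
  "is_bilinear m \<longleftrightarrow> (\<forall>q. is_linear (\<lambda>p. m p q)) \<and> (\<forall>p. is_linear (\<lambda>q. m p q))"

lemma is_bilinearD1: "is_bilinear m \<Longrightarrow> is_linear (\<lambda>p. m p q)"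
  and is_bilinearD2: "is_bilinear m \<Longrightarrow> is_linear (\<lambda>q. m p q)"
  by (auto simp: is_bilinear_def)

definition tens_mult ::
  "(('a \<Rightarrow>\<^sub>0 'k::comm_ring_1) \<Rightarrow> ('a \<Rightarrow>\<^sub>0 'k) \<Rightarrow> ('a \<Rightarrow>\<^sub>0 'k))
    \<Rightarrow> (('b \<Rightarrow>\<^sub>0 'k) \<Rightarrow> ('b \<Rightarrow>\<^sub>0 'k) \<Rightarrow> ('b \<Rightarrow>\<^sub>0 'k))
    \<Rightarrow> ('a \<times> 'b \<Rightarrow>\<^sub>0 'k) \<Rightarrow> ('a \<times> 'b \<Rightarrow>\<^sub>0 'k) \<Rightarrow> ('a \<times> 'b \<Rightarrow>\<^sub>0 'k)" where
  "tens_mult mA mB P Q =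
     lin (\<lambda>(a, b). lin (\<lambda>(c, d). tens (mA (bvec a) (bvec c)) (mB (bvec b) (bvec d))) Q) P"

lemma tens_mult_single [simp]:
  "tens_mult mA mB (bvec (a, b)) (bvec (c, d)) = tens (mA (bvec a) (bvec c)) (mB (bvec b) (bvec d))"
  by (simp add: tens_mult_def)

lemma is_linear_tens_mult_left [linear_intros]:
  "is_linear f \<Longrightarrow> is_linear (\<lambda>p. tens_mult mA mB (f p) Q)"
  unfolding tens_mult_def by (rule linear_intros)

lemma is_linear_tens_mult_right [linear_intros]:
  "is_linear f \<Longrightarrow> is_linear (\<lambda>p. tens_mult mA mB Q (f p))"
  unfolding tens_mult_def by (rule linear_intros) (auto intro: linear_intros simp: case_prod_beta)

lemma is_bilinear_tens_mult: "is_bilinear (tens_mult mA mB)"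
  unfolding is_bilinear_def by (auto intro!: linear_intros)

lemma tens_mult_add_left [simp]: "tens_mult mA mB (p + p') q = tens_mult mA mB p q + tens_mult mA mB p' q"
  by (simp add: tens_mult_def)

lemma tens_mult_add_right [simp]: "tens_mult mA mB p (q + q') = tens_mult mA mB p q + tens_mult mA mB p q'"
  by (rule is_linear_add[OF is_linear_tens_mult_right[OF is_linear_id]])

lemma tens_mult_tens:
  assumes A: "is_bilinear mA" and B: "is_bilinear mB"
  shows "tens_mult mA mB (tens p q) (tens r s) = tens (mA p r) (mB q s)"
proof (rule bilinear_eqI[where L = "\<lambda>p q. tens_mult mA mB (tens p q) (tens r s)"],
    (intro linear_intros is_bilinearD1[OF A] is_bilinearD1[OF B])+)
  show "tens_mult mA mB (tens (bvec a) (bvec b)) (tens r s) = tens (mA (bvec a) r) (mB (bvec b) s)"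
    for a b
    by (rule bilinear_eqI[where L = "\<lambda>r s. tens_mult mA mB (tens (bvec a) (bvec b)) (tens r s)"],
        (intro linear_intros is_bilinearD2[OF A] is_bilinearD2[OF B])+) simp
qed

lemma tens_mult_assoc:
  fixes mA :: "('a \<Rightarrow>\<^sub>0 'k::comm_ring_1) \<Rightarrow> ('a \<Rightarrow>\<^sub>0 'k) \<Rightarrow> ('a \<Rightarrow>\<^sub>0 'k)"
    and mB :: "('b \<Rightarrow>\<^sub>0 'k) \<Rightarrow> ('b \<Rightarrow>\<^sub>0 'k) \<Rightarrow> ('b \<Rightarrow>\<^sub>0 'k)"
  assumes A: "is_bilinear mA" and B: "is_bilinear mB"
    and assoc_A: "\<And>p q r. mA (mA p q) r = mA p (mA q r)"
    and assoc_B: "\<And>p q r. mB (mB p q) r = mB p (mB q r)"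
  shows "tens_mult mA mB (tens_mult mA mB P Q) R = tens_mult mA mB P (tens_mult mA mB Q R)"
proof (rule bilinear_eqI[where L = "\<lambda>P Q. tens_mult mA mB (tens_mult mA mB P Q) R"], (intro linear_intros)+)
  fix a b :: "'a \<times> 'b"
  show "tens_mult mA mB (tens_mult mA mB (bvec a) (bvec b)) R
      = tens_mult mA mB (bvec a) (tens_mult mA mB (bvec b) R)"
  proof (rule is_linear_eqI[where f = "\<lambda>R. tens_mult mA mB (tens_mult mA mB (bvec a) (bvec b)) R"],
      (intro linear_intros)+)
    fix c :: "'a \<times> 'b"
    show "tens_mult mA mB (tens_mult mA mB (bvec a) (bvec b)) (bvec c)
        = tens_mult mA mB (bvec a) (tens_mult mA mB (bvec b) (bvec c))"
      using tens_mult_tens[OF A B, of _ _ "bvec (fst c)" "bvec (snd c)"]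
        tens_mult_tens[OF A B, of "bvec (fst a)" "bvec (snd a)"]
      by (cases a, cases b, cases c) (simp add: assoc_A assoc_B)
  qed
qed

definition tens_reassoc :: "('a \<times> 'b \<Rightarrow>\<^sub>0 'k::comm_ring_1) \<Rightarrow> ('c \<Rightarrow>\<^sub>0 'k) \<Rightarrow> ('a \<times> 'b \<times> 'c \<Rightarrow>\<^sub>0 'k)" where
  "tens_reassoc W q = lin (\<lambda>(a1, a2). tens (bvec a1) (tens (bvec a2) q)) W"

lemma tens_reassoc_single [simp]:
  "tens_reassoc (Poly_Mapping.single (a1, a2) c) q = smul c (tens (bvec a1) (tens (bvec a2) q))"
  by (simp add: tens_reassoc_def)

lemma tens_reassoc_add_left [simp]: "tens_reassoc (p + p') q = tens_reassoc p q + tens_reassoc p' q"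
  by (simp add: tens_reassoc_def)

lemma is_linear_tens_reassoc_left [linear_intros]: "is_linear f \<Longrightarrow> is_linear (\<lambda>p. tens_reassoc (f p) q)"
  unfolding tens_reassoc_def by (rule linear_intros)

lemma is_linear_tens_reassoc_right [linear_intros]: "is_linear f \<Longrightarrow> is_linear (\<lambda>p. tens_reassoc W (f p))"
  unfolding tens_reassoc_def is_linear_def by (simp add: lin_add_fun lin_smul_fun case_prod_unfold)

lemma tens_reassoc_tens: "tens_reassoc (tens p1 p2) q = tens p1 (tens p2 q)"
  by (rule bilinear_eqI[where L = "\<lambda>p1 p2. tens_reassoc (tens p1 p2) q"], (intro linear_intros)+) simp

lemma tens_reassoc_bvec: "tens_reassoc W (bvec b) = lin (\<lambda>(a1, a2). bvec (a1, a2, b)) W"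
  by (rule is_linear_eqI[where f = "\<lambda>W. tens_reassoc W (bvec b)"]) (auto intro!: linear_intros)


lemma forest_cases:
  obtains (More) t x G where "F = More t x G" | (Bp) G where "F = One (Bp G)" | (bul) "F = bul"
  by (metis forest.exhaust tree.exhaust)

lemma size_forest_pos [simp]: "0 < size (F :: 'x forest)"
  by (cases F) auto

lemma restF_firstT [simp]: "restF (firstT Q) Q = Q"
  by (cases Q) auto

lemma splice_lastT [simp]: "splice P (lastT P) bul = P"
  by (induction P) auto

lemma tprod_Dot_right [simp]: "tprod lam t Dot = bvec t"
  by (cases t) auto

fun fappend :: "'x forest \<Rightarrow> 'x \<Rightarrow> 'x forest \<Rightarrow> 'x forest" where
  "fappend (One t) x R = More t x R"
| "fappend (More t y S) x R = More t y (fappend S x R)"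

lemma More_eq_fappend: "More t x F = fappend (One t) x F"
  by simp

lemma lastT_fappend [simp]: "lastT (fappend S x R) = lastT R"
  by (induction S) auto

lemma firstT_fappend [simp]: "firstT (fappend U x R) = firstT U"
  by (cases U) auto

lemma splice_fappend_left: "splice (fappend S x R) s T = fappend S x (splice R s T)"
  by (induction S) auto

lemma splice_fappend_right: "splice S s (fappend U x R) = fappend (splice S s U) x R"
  by (induction S) (cases U; auto)+

definition fappend_lin ::
  "('x forest \<Rightarrow>\<^sub>0 'k::comm_ring_1) \<Rightarrow> 'x \<Rightarrow> ('x forest \<Rightarrow>\<^sub>0 'k) \<Rightarrow> ('x forest \<Rightarrow>\<^sub>0 'k)" where
  "fappend_lin W y Z = lin (\<lambda>V. lmap (fappend V y) Z) W"

abbreviation Bplus :: "('x forest \<Rightarrow>\<^sub>0 'k::comm_ring_1) \<Rightarrow> ('x forest \<Rightarrow>\<^sub>0 'k)" where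
  "Bplus \<equiv> lmap (\<lambda>F. One (Bp F))"

definition dec :: "'x \<Rightarrow> 'x forest" where
  "dec x = More Dot x bul"

lemma eps_a_bul [simp]: "eps_a bul = 1"
  and eps_a_More [simp]: "eps_a (More t x F) = 0"
  and eps_a_Bp [simp]: "eps_a (One (Bp F)) = 0"
  and eps_a_dec [simp]: "eps_a (dec x) = 0"
  by (simp_all add: eps_a_def dec_def)


section \<open>Associativity of the product\<close>

locale angular =
  fixes lam :: "'k::comm_ring_1"
begin

abbreviation diamond :: "('x forest \<Rightarrow>\<^sub>0 'k) \<Rightarrow> ('x forest \<Rightarrow>\<^sub>0 'k) \<Rightarrow> ('x forest \<Rightarrow>\<^sub>0 'k)"
    (infixl \<open>\<diamond>\<close> 70) where
  "p \<diamond> q \<equiv> diam lam p q"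

lemma diamond_single [simp]:
  "Poly_Mapping.single a c \<diamond> Poly_Mapping.single b d = smul (c * d) (fprod lam a b)"
  by (simp add: diam_def)

lemma diamond_add_left [simp]: "(p + p') \<diamond> q = p \<diamond> q + p' \<diamond> q"
  by (simp add: diam_def)

lemma diamond_add_right [simp]: "p \<diamond> (q + q') = p \<diamond> q + p \<diamond> q'"
  by (simp add: diam_def lin_add_fun)

lemma diamond_smul_left [simp]: "smul c p \<diamond> q = smul c (p \<diamond> q)"
  by (simp add: diam_def)

lemma diamond_smul_right [simp]: "p \<diamond> smul c q = smul c (p \<diamond> q)"
  by (simp add: diam_def lin_smul_fun)

lemma is_linear_diamond_left [linear_intros]: "is_linear f \<Longrightarrow> is_linear (\<lambda>p. f p \<diamond> q)"
  by (simp add: is_linear_def)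

lemma is_linear_diamond_right [linear_intros]: "is_linear f \<Longrightarrow> is_linear (\<lambda>p. q \<diamond> f p)"
  by (simp add: is_linear_def)

lemma is_bilinear_diamond: "is_bilinear (diam lam)"
  unfolding is_bilinear_def by (auto intro!: linear_intros)

lemma fprod_More_left: "fprod lam (More t x P) Q = lmap (More t x) (fprod lam P Q)"
  by (simp add: fprod_def)

lemma fprod_fappend_left: "fprod lam (fappend S x P) Q = lmap (fappend S x) (fprod lam P Q)"
  by (simp add: fprod_def splice_fappend_left)

lemma fprod_fappend_right: "fprod lam S (fappend U x R) = lmap (\<lambda>V. fappend V x R) (fprod lam S U)"
  by (simp add: fprod_def splice_fappend_right)

lemma fprod_One_One: "fprod lam (One t) (One u) = lmap One (tprod lam t u)"
  by (simp add: fprod_def)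

lemma fprod_One_More: "fprod lam (One t) (More u y Q) = lmap (\<lambda>s. More s y Q) (tprod lam t u)"
  by (simp add: fprod_def)

lemma fprod_bul_left [simp]: "fprod lam bul Q = bvec Q"
  by (simp add: fprod_def)

lemma fprod_bul_right [simp]: "fprod lam P bul = bvec P"
  by (simp add: fprod_def)

lemma fprod_dec_left: "fprod lam (dec x) F = bvec (More Dot x F)"
  by (simp add: dec_def fprod_More_left)

lemma fprod_One_More_Dot: "fprod lam (One t) (More Dot x F) = bvec (More t x F)"
  by (simp add: fprod_One_More)

lemma fprod_Bp_Bp:
  "fprod lam (One (Bp F)) (One (Bp G))
   = Bplus (fprod lam (One (Bp F)) G + fprod lam F (One (Bp G)) + smul lam (fprod lam F G))"
  by (simp add: fprod_def)

lemma Bplus_rota_baxter: "Bplus u \<diamond> Bplus v = Bplus (Bplus u \<diamond> v + u \<diamond> Bplus v + smul lam (u \<diamond> v))"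
  by (rule bilinear_eqI[where L = "\<lambda>u v. Bplus u \<diamond> Bplus v"]) (auto intro!: linear_intros simp: fprod_Bp_Bp)

lemma diamond_bul_left [simp]: "bvec bul \<diamond> p = p"
  by (rule is_linear_eqI[where f = "\<lambda>p. bvec bul \<diamond> p"]) (auto intro!: linear_intros)

lemma diamond_bul_right [simp]: "p \<diamond> bvec bul = p"
  by (rule is_linear_eqI[where f = "\<lambda>p. p \<diamond> bvec bul"]) (auto intro!: linear_intros)

lemma diamond_fappend_left: "bvec (fappend S x P) \<diamond> W = lmap (fappend S x) (bvec P \<diamond> W)"
  by (rule is_linear_eqI[where f = "\<lambda>W. bvec (fappend S x P) \<diamond> W"])
     (auto intro!: linear_intros simp: fprod_fappend_left)

lemma diamond_fappend_right: "W \<diamond> bvec (fappend U x R) = lmap (\<lambda>V. fappend V x R) (W \<diamond> bvec U)"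
  by (rule is_linear_eqI[where f = "\<lambda>W. W \<diamond> bvec (fappend U x R)"])
     (auto intro!: linear_intros simp: fprod_fappend_right)

lemma diamond_lmap_fappend_left: "lmap (fappend S x) W \<diamond> bvec R = lmap (fappend S x) (W \<diamond> bvec R)"
  by (rule is_linear_eqI[where f = "\<lambda>W. lmap (fappend S x) W \<diamond> bvec R"])
     (auto intro!: linear_intros simp: fprod_fappend_left)

lemma diamond_lmap_fappend_right:
  "bvec S \<diamond> lmap (\<lambda>V. fappend V x R) W = lmap (\<lambda>V. fappend V x R) (bvec S \<diamond> W)"
  by (rule is_linear_eqI[where f = "\<lambda>W. bvec S \<diamond> lmap (\<lambda>V. fappend V x R) W"])
     (auto intro!: linear_intros simp: fprod_fappend_right)

lemma diamond_fappend_lin_left: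
  "lmap (\<lambda>V. fappend V y Q) W \<diamond> bvec R = fappend_lin W y (fprod lam Q R)"
  unfolding fappend_lin_def
  by (rule is_linear_eqI[where f = "\<lambda>W. lmap (\<lambda>V. fappend V y Q) W \<diamond> bvec R"])
     (auto intro!: linear_intros simp: fprod_fappend_left)

lemma diamond_fappend_lin_right: "bvec P \<diamond> lmap (fappend U y) Z = fappend_lin (bvec P \<diamond> bvec U) y Z"
  unfolding fappend_lin_def
  by (rule is_linear_eqI[where f = "\<lambda>Z. bvec P \<diamond> lmap (fappend U y) Z"])
     (auto intro!: linear_intros simp: fprod_fappend_right lmap_def)

lemma fprod_assoc_planted:
  fixes F G H :: "'x forest"
  assumes IH: "\<And>A B C :: 'x forest.
      size A + size B + size C < size (One (Bp F)) + size (One (Bp G)) + size (One (Bp H)) \<Longrightarrow>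
      fprod lam A B \<diamond> bvec C = bvec A \<diamond> fprod lam B C"
  shows "fprod lam (One (Bp F)) (One (Bp G)) \<diamond> bvec (One (Bp H))
       = bvec (One (Bp F)) \<diamond> fprod lam (One (Bp G)) (One (Bp H))"
    (is "fprod lam ?P ?Q \<diamond> bvec ?R = bvec ?P \<diamond> fprod lam ?Q ?R")
proof -
  define u where "u = fprod lam ?P G + fprod lam F ?Q + smul lam (fprod lam F G)"
  define v where "v = fprod lam ?Q H + fprod lam G ?R + smul lam (fprod lam G H)"
  have "fprod lam ?P ?Q \<diamond> bvec ?R = Bplus u \<diamond> Bplus (bvec H)"
    unfolding u_def by (simp only: fprod_Bp_Bp lmap_single)
  also have "\<dots> = Bplus (fprod lam ?P ?Q \<diamond> bvec H + u \<diamond> bvec ?R + smul lam (u \<diamond> bvec H))"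
    unfolding Bplus_rota_baxter u_def by (simp only: fprod_Bp_Bp lmap_single)
  also have "\<dots> = Bplus (bvec ?P \<diamond> v + bvec F \<diamond> fprod lam ?Q ?R + smul lam (bvec F \<diamond> v))"
    unfolding u_def v_def by (simp add: IH algebra_simps smul_add_right)
  also have "\<dots> = Bplus (bvec F) \<diamond> Bplus v"
    unfolding Bplus_rota_baxter v_def by (simp only: fprod_Bp_Bp lmap_single)
  also have "\<dots> = bvec ?P \<diamond> fprod lam ?Q ?R"
    unfolding v_def by (simp only: fprod_Bp_Bp lmap_single)
  finally show ?thesis .
qed

lemma fprod_assoc_fappend_left:
  assumes "fprod lam P Q \<diamond> bvec R = bvec P \<diamond> fprod lam Q R"
  shows "fprod lam (fappend S x P) Q \<diamond> bvec R = bvec (fappend S x P) \<diamond> fprod lam Q R"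
  using assms by (simp add: fprod_fappend_left diamond_lmap_fappend_left diamond_fappend_left)

lemma fprod_assoc_fappend_right:
  assumes "fprod lam P Q \<diamond> bvec R = bvec P \<diamond> fprod lam Q R"
  shows "fprod lam P Q \<diamond> bvec (fappend R x U) = bvec P \<diamond> fprod lam Q (fappend R x U)"
  using assms by (simp add: fprod_fappend_right diamond_fappend_right diamond_lmap_fappend_right)

lemma fprod_assoc_fappend_middle:
  "fprod lam P (fappend U y Q) \<diamond> bvec R = bvec P \<diamond> fprod lam (fappend U y Q) R"
  by (simp add: fprod_fappend_right fprod_fappend_left diamond_fappend_lin_left diamond_fappend_lin_right)

lemma fprod_assoc: "fprod lam P Q \<diamond> bvec R = bvec P \<diamond> fprod lam Q R"
proof (induction "size P + size Q + size R" arbitrary: P Q R rule: less_induct)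
  case less
  consider (P_More) t x P' where "P = More t x P'"
    | (R_More) r x R' where "R = More r x R'"
    | (Q_More) q y Q' where "Q = More q y Q'"
    | (planted) F G H where "P = One (Bp F)" "Q = One (Bp G)" "R = One (Bp H)"
    | (bul) "P = bul \<or> Q = bul \<or> R = bul"
    by (metis forest_cases)
  then show ?case
  proof cases
    case P_More
    have "fprod lam P' Q \<diamond> bvec R = bvec P' \<diamond> fprod lam Q R"
      using P_More by (intro less(1)) simp
    then show ?thesis
      unfolding P_More More_eq_fappend by (rule fprod_assoc_fappend_left)
  next
    case R_More
    have "fprod lam P Q \<diamond> bvec (One r) = bvec P \<diamond> fprod lam Q (One r)"
      using R_More by (intro less(1)) simp
    then show ?thesis
      unfolding R_More More_eq_fappend by (rule fprod_assoc_fappend_right)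
  next
    case Q_More
    then show ?thesis
      unfolding More_eq_fappend by (simp only: fprod_assoc_fappend_middle)
  next
    case planted
    show ?thesis
      unfolding planted by (rule fprod_assoc_planted) (rule less(1)[unfolded planted])
  next
    case bul
    then show ?thesis
      by auto
  qed
qed

lemma diamond_assoc:
  fixes p q r :: "'x forest \<Rightarrow>\<^sub>0 'k"
  shows "(p \<diamond> q) \<diamond> r = p \<diamond> (q \<diamond> r)"
proof (rule bilinear_eqI[where L = "\<lambda>p q. (p \<diamond> q) \<diamond> r"], (intro linear_intros)+)
  show "(bvec a \<diamond> bvec b) \<diamond> r = bvec a \<diamond> (bvec b \<diamond> r)" for a b :: "'x forest"
    by (rule is_linear_eqI[where f = "\<lambda>r. (bvec a \<diamond> bvec b) \<diamond> r"])
       (auto intro!: linear_intros simp: fprod_assoc)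
qed

end


section \<open>Recursive description of the coproduct\<close>

abbreviation Bplus_right :: "('a \<times> 'x forest \<Rightarrow>\<^sub>0 'k::comm_ring_1) \<Rightarrow> ('a \<times> 'x forest \<Rightarrow>\<^sub>0 'k)" where
  "Bplus_right W \<equiv> lin (\<lambda>(a, b). bvec (a, One (Bp b))) W"

lemma Bplus_right_tens: "Bplus_right (tens p q) = tens p (Bplus q)"
  by (rule bilinear_eqI[where L = "\<lambda>p q. Bplus_right (tens p q)"], (intro linear_intros)+) simp

definition primitive_coprod :: "'x forest \<Rightarrow> ('x forest \<times> 'x forest \<Rightarrow>\<^sub>0 'k::comm_ring_1)" where
  "primitive_coprod a = bvec (bul, a) + bvec (a, bul)"

context angular
begin

abbreviation diamond2 ::
  "('x forest \<times> 'x forest \<Rightarrow>\<^sub>0 'k) \<Rightarrow> ('x forest \<times> 'x forest \<Rightarrow>\<^sub>0 'k) \<Rightarrow> ('x forest \<times> 'x forest \<Rightarrow>\<^sub>0 'k)"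
    (infixl \<open>\<diamond>\<^sub>2\<close> 70) where
  "P \<diamond>\<^sub>2 Q \<equiv> tens_mult (diam lam) (diam lam) P Q"

lemma diamond2_tens: "tens p q \<diamond>\<^sub>2 tens r s = tens (p \<diamond> r) (q \<diamond> s)"
  by (rule tens_mult_tens[OF is_bilinear_diamond is_bilinear_diamond])

lemma diamond2_assoc: "(P \<diamond>\<^sub>2 Q) \<diamond>\<^sub>2 R = P \<diamond>\<^sub>2 (Q \<diamond>\<^sub>2 R)"
  by (rule tens_mult_assoc[OF is_bilinear_diamond is_bilinear_diamond diamond_assoc diamond_assoc])

lemma diamond2_bul_left [simp]: "bvec (bul, bul) \<diamond>\<^sub>2 W = W"
  by (rule is_linear_eqI[where f = "\<lambda>W. bvec (bul, bul) \<diamond>\<^sub>2 W"]) (auto intro!: linear_intros)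

lemma diamond2_bul_right [simp]: "W \<diamond>\<^sub>2 bvec (bul, bul) = W"
  by (rule is_linear_eqI[where f = "\<lambda>W. W \<diamond>\<^sub>2 bvec (bul, bul)"]) (auto intro!: linear_intros)

lemma cl_Nil [simp]: "cl lam [] = bvec bul"
  by (simp add: cl_def)

lemma cl_Cons [simp]: "cl lam (h # hs) = bvec (hat h) \<diamond> cl lam hs"
  by (simp add: cl_def)

lemma cl_append: "cl lam (hs @ hs') = cl lam hs \<diamond> cl lam hs'"
  by (induction hs) (auto simp: diamond_assoc)

lemma coprod_bul: "coprod_a lam bul = bvec (bul, bul)"
  by (simp add: coprod_a_def)

lemma coprod_Bp: "coprod_a lam (One (Bp F)) = bvec (One (Bp F), bul) + Bplus_right (coprod_a lam F)"
proof -
  have "Bplus_right (coprod_a lam F)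
      = sum_list (map (\<lambda>(h, w). tens (cl lam h) (Bplus (evalF lam w))) (admF F))"
    unfolding coprod_a_def
    by (simp add: is_linear_sum_list[OF is_linear_lin[OF is_linear_id]]
        Bplus_right_tens[unfolded case_prod_unfold] case_prod_unfold o_def)
  then show ?thesis
    by (simp add: coprod_a_def case_prod_unfold o_def)
qed

lemma coprod_One: "coprod_a lam (One t) = sum_list (map (\<lambda>(h, w). tens (cl lam h) (lmap One (evalT lam w))) (admT t))"
  by (simp add: coprod_a_def case_prod_unfold o_def)

lemma primitive_coprod_dec:
  "primitive_coprod (dec x) = tens (cl lam []) (bvec (cdec (Some x))) + tens (cl lam [PDec x]) (bvec (cdec None))"
  by (simp add: primitive_coprod_def dec_def)

text \<open>An admissible subforest of T x F consists of one of T, the choice whether to cut out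
  the occurrence of x, and one of F; both the closure and the quotient factor accordingly.\<close>

lemma coprod_More:
  "coprod_a lam (More t x F) = coprod_a lam (One t) \<diamond>\<^sub>2 (primitive_coprod (dec x) \<diamond>\<^sub>2 coprod_a lam F)"
proof -
  have factor: "sum_list (map (\<lambda>(h2, w2). tens (cl lam (h1 @ hx @ h2)) (evalF lam (MMore w1 s w2))) (admF F))
     = tens (cl lam h1) (lmap One (evalT lam w1)) \<diamond>\<^sub>2 (tens (cl lam hx) (bvec (cdec s)) \<diamond>\<^sub>2 coprod_a lam F)"
    for h1 hx w1 s
  proof -
    have "is_linear (\<lambda>W. tens (cl lam h1) (lmap One (evalT lam w1)) \<diamond>\<^sub>2 (tens (cl lam hx) (bvec (cdec s)) \<diamond>\<^sub>2 W))"
      by (intro linear_intros)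
    from is_linear_sum_list[OF this] show ?thesis
      unfolding coprod_a_def by (simp add: cl_append diamond2_tens case_prod_unfold o_def)
  qed
  have by_first_tree: "sum_list (map (\<lambda>(h, w). tens (cl lam h) (evalF lam w))
          ((\<lambda>(h1, w1). concat (map (\<lambda>(hx, s). map (\<lambda>(h2, w2). (h1 @ hx @ h2, MMore w1 s w2)) (admF F))
             [([], Some x), ([PDec x], None)])) z))
       = (\<lambda>(h1, w1). tens (cl lam h1) (lmap One (evalT lam w1)) \<diamond>\<^sub>2 (primitive_coprod (dec x) \<diamond>\<^sub>2 coprod_a lam F)) z"
    for z
    using factor[of "fst z" "[]" "snd z" "Some x"] factor[of "fst z" "[PDec x]" "snd z" None]
    by (simp add: primitive_coprod_dec map_map o_def case_prod_unfold sum_list_concat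
        del: append.simps append_Nil)
  have "coprod_a lam (More t x F)
      = sum_list (map (\<lambda>(h1, w1). tens (cl lam h1) (lmap One (evalT lam w1)) \<diamond>\<^sub>2
          (primitive_coprod (dec x) \<diamond>\<^sub>2 coprod_a lam F)) (admT t))"
    unfolding coprod_a_def[of lam "More t x F"] admF.simps map_concat sum_list_concat map_map o_def
      by_first_tree ..
  also have "\<dots> = coprod_a lam (One t) \<diamond>\<^sub>2 (primitive_coprod (dec x) \<diamond>\<^sub>2 coprod_a lam F)"
  proof -
    have "is_linear (\<lambda>W. W \<diamond>\<^sub>2 (primitive_coprod (dec x) \<diamond>\<^sub>2 coprod_a lam F))"
      by (intro linear_intros)
    from is_linear_sum_list[OF this] show ?thesis
      unfolding coprod_One by (simp add: case_prod_unfold o_def)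
  qed
  finally show ?thesis .
qed

lemma coprod_dec: "coprod_a lam (dec x) = primitive_coprod (dec x)"
  by (simp add: dec_def coprod_More[folded dec_def] coprod_bul)

lemma coprod_fappend:
  "coprod_a lam (fappend S y R) = coprod_a lam S \<diamond>\<^sub>2 (primitive_coprod (dec y) \<diamond>\<^sub>2 coprod_a lam R)"
  by (induction S y R rule: fappend.induct) (simp_all add: coprod_More diamond2_assoc)

end


section \<open>Multiplicativity of the coproduct\<close>

context angular
begin

lemma coprod_Bplus:
  "lin (coprod_a lam) (Bplus W) = tens (Bplus W) (bvec bul) + Bplus_right (lin (coprod_a lam) W)"
  by (rule is_linear_eqI[where f = "\<lambda>W. lin (coprod_a lam) (Bplus W)"])
     (auto intro!: linear_intros simp: coprod_Bp)

lemma tens_bul_diamond2_Bplus_right: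
  "tens A (bvec bul) \<diamond>\<^sub>2 Bplus_right V = Bplus_right (tens A (bvec bul) \<diamond>\<^sub>2 V)"
proof (rule bilinear_eqI[where L = "\<lambda>A V. tens A (bvec bul) \<diamond>\<^sub>2 Bplus_right V"], (intro linear_intros)+)
  fix a and c :: "'x forest \<times> 'x forest"
  show "tens (bvec a) (bvec bul) \<diamond>\<^sub>2 Bplus_right (bvec c) = Bplus_right (tens (bvec a) (bvec bul) \<diamond>\<^sub>2 bvec c)"
    by (cases c) (simp add: Bplus_right_tens)
qed

lemma Bplus_right_diamond2_tens_bul:
  "Bplus_right U \<diamond>\<^sub>2 tens C (bvec bul) = Bplus_right (U \<diamond>\<^sub>2 tens C (bvec bul))"
proof (rule bilinear_eqI[where L = "\<lambda>U C. Bplus_right U \<diamond>\<^sub>2 tens C (bvec bul)"], (intro linear_intros)+)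
  fix c and a :: "'x forest \<times> 'x forest"
  show "Bplus_right (bvec a) \<diamond>\<^sub>2 tens (bvec c) (bvec bul) = Bplus_right (bvec a \<diamond>\<^sub>2 tens (bvec c) (bvec bul))"
    by (cases a) (simp add: Bplus_right_tens)
qed

lemma Bplus_right_rota_baxter:
  "Bplus_right U \<diamond>\<^sub>2 Bplus_right V
   = Bplus_right (Bplus_right U \<diamond>\<^sub>2 V + U \<diamond>\<^sub>2 Bplus_right V + smul lam (U \<diamond>\<^sub>2 V))"
proof (rule bilinear_eqI[where L = "\<lambda>U V. Bplus_right U \<diamond>\<^sub>2 Bplus_right V"], (intro linear_intros)+)
  fix a c :: "'x forest \<times> 'x forest"
  show "Bplus_right (bvec a) \<diamond>\<^sub>2 Bplus_right (bvec c)
      = Bplus_right (Bplus_right (bvec a) \<diamond>\<^sub>2 bvec c + bvec a \<diamond>\<^sub>2 Bplus_right (bvec c)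
          + smul lam (bvec a \<diamond>\<^sub>2 bvec c))"
    by (cases a; cases c) (simp add: Bplus_right_tens fprod_Bp_Bp)
qed

lemma coprod_fprod_planted:
  fixes F G :: "'x forest"
  assumes IH: "\<And>A B :: 'x forest. size A + size B < size (One (Bp F)) + size (One (Bp G))
      \<Longrightarrow> lin (coprod_a lam) (fprod lam A B) = coprod_a lam A \<diamond>\<^sub>2 coprod_a lam B"
  shows "lin (coprod_a lam) (fprod lam (One (Bp F)) (One (Bp G)))
       = coprod_a lam (One (Bp F)) \<diamond>\<^sub>2 coprod_a lam (One (Bp G))"
    (is "lin (coprod_a lam) (fprod lam ?P ?Q) = _")
proof -
  define e :: "'x forest \<Rightarrow>\<^sub>0 'k" where "e = bvec bul"
  define U where "U = coprod_a lam F"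
  define V where "V = coprod_a lam G"
  define X where "X = fprod lam ?P G + fprod lam F ?Q + smul lam (fprod lam F G)"
  have coprod_P: "coprod_a lam ?P = tens (bvec ?P) e + Bplus_right U"
    unfolding e_def U_def by (simp add: coprod_Bp)
  have coprod_Q: "coprod_a lam ?Q = tens (bvec ?Q) e + Bplus_right V"
    unfolding e_def V_def by (simp add: coprod_Bp)
  have "Bplus X = fprod lam ?P ?Q"
    unfolding X_def by (simp add: fprod_Bp_Bp)
  then have "lin (coprod_a lam) (fprod lam ?P ?Q) = tens (bvec ?P \<diamond> bvec ?Q) e + Bplus_right (lin (coprod_a lam) X)"
    unfolding e_def using coprod_Bplus[of X] by simp
  also have "lin (coprod_a lam) X
      = coprod_a lam ?P \<diamond>\<^sub>2 V + U \<diamond>\<^sub>2 coprod_a lam ?Q + smul lam (U \<diamond>\<^sub>2 V)"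
    unfolding X_def U_def V_def by (simp add: IH)
  also have "tens (bvec ?P \<diamond> bvec ?Q) e + Bplus_right \<dots>
      = tens (bvec ?P) e \<diamond>\<^sub>2 tens (bvec ?Q) e + tens (bvec ?P) e \<diamond>\<^sub>2 Bplus_right V
        + Bplus_right U \<diamond>\<^sub>2 tens (bvec ?Q) e + Bplus_right U \<diamond>\<^sub>2 Bplus_right V"
    unfolding coprod_P coprod_Q e_def tens_bul_diamond2_Bplus_right Bplus_right_diamond2_tens_bul
      Bplus_right_rota_baxter diamond2_tens
    by (simp add: algebra_simps)
  also have "\<dots> = coprod_a lam ?P \<diamond>\<^sub>2 coprod_a lam ?Q"
    unfolding coprod_P coprod_Q by (simp add: algebra_simps)
  finally show ?thesis .
qed

lemma coprod_fprod_fappend_left: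
  assumes "lin (coprod_a lam) (fprod lam P Q) = coprod_a lam P \<diamond>\<^sub>2 coprod_a lam Q"
  shows "lin (coprod_a lam) (fprod lam (fappend S x P) Q) = coprod_a lam (fappend S x P) \<diamond>\<^sub>2 coprod_a lam Q"
proof -
  have "lin (coprod_a lam) (fprod lam (fappend S x P) Q)
      = lin (\<lambda>R. coprod_a lam S \<diamond>\<^sub>2 (primitive_coprod (dec x) \<diamond>\<^sub>2 coprod_a lam R)) (fprod lam P Q)"
    unfolding fprod_fappend_left lin_lmap coprod_fappend ..
  also have "\<dots> = coprod_a lam S \<diamond>\<^sub>2 (primitive_coprod (dec x) \<diamond>\<^sub>2 lin (coprod_a lam) (fprod lam P Q))"
    by (rule lin_comp) (intro linear_intros)
  finally show ?thesis
    using assms by (simp add: coprod_fappend diamond2_assoc)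
qed

lemma coprod_fprod_fappend_right:
  assumes "lin (coprod_a lam) (fprod lam P U) = coprod_a lam P \<diamond>\<^sub>2 coprod_a lam U"
  shows "lin (coprod_a lam) (fprod lam P (fappend U y R)) = coprod_a lam P \<diamond>\<^sub>2 coprod_a lam (fappend U y R)"
proof -
  have "lin (coprod_a lam) (fprod lam P (fappend U y R))
      = lin (\<lambda>V. coprod_a lam V \<diamond>\<^sub>2 (primitive_coprod (dec y) \<diamond>\<^sub>2 coprod_a lam R)) (fprod lam P U)"
    unfolding fprod_fappend_right lin_lmap coprod_fappend ..
  also have "\<dots> = lin (coprod_a lam) (fprod lam P U) \<diamond>\<^sub>2 (primitive_coprod (dec y) \<diamond>\<^sub>2 coprod_a lam R)"
    by (rule lin_comp) (intro linear_intros)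
  finally show ?thesis
    using assms by (simp add: coprod_fappend diamond2_assoc)
qed

lemma coprod_fprod: "lin (coprod_a lam) (fprod lam P Q) = coprod_a lam P \<diamond>\<^sub>2 coprod_a lam Q"
proof (induction "size P + size Q" arbitrary: P Q rule: less_induct)
  case less
  consider (P_More) t x P' where "P = More t x P'"
    | (Q_More) q y Q' where "Q = More q y Q'"
    | (planted) F G where "P = One (Bp F)" "Q = One (Bp G)"
    | (bul) "P = bul \<or> Q = bul"
    by (metis forest_cases)
  then show ?case
  proof cases
    case P_More
    have "lin (coprod_a lam) (fprod lam P' Q) = coprod_a lam P' \<diamond>\<^sub>2 coprod_a lam Q"
      using P_More by (intro less(1)) simp
    then show ?thesis
      unfolding P_More More_eq_fappend by (rule coprod_fprod_fappend_left)
  next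
    case Q_More
    have "lin (coprod_a lam) (fprod lam P (One q)) = coprod_a lam P \<diamond>\<^sub>2 coprod_a lam (One q)"
      using Q_More by (intro less(1)) simp
    then show ?thesis
      unfolding Q_More More_eq_fappend by (rule coprod_fprod_fappend_right)
  next
    case planted
    show ?thesis
      unfolding planted by (rule coprod_fprod_planted) (rule less(1)[unfolded planted])
  next
    case bul
    then show ?thesis
      by (auto simp: coprod_bul)
  qed
qed

lemma coprod_lin_diamond: "lin (coprod_a lam) (p \<diamond> q) = lin (coprod_a lam) p \<diamond>\<^sub>2 lin (coprod_a lam) q"
  by (rule bilinear_eqI[where L = "\<lambda>p q. lin (coprod_a lam) (p \<diamond> q)"], (intro linear_intros)+)
     (simp add: coprod_fprod)

end


section \<open>The counit\<close>

definition counit_left :: "('x forest \<times> 'b \<Rightarrow>\<^sub>0 'k::comm_ring_1) \<Rightarrow> ('b \<Rightarrow>\<^sub>0 'k)" where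
  "counit_left W = lin (\<lambda>(a, b). smul (eps_a a) (bvec b)) W"

definition counit_right :: "('a \<times> 'x forest \<Rightarrow>\<^sub>0 'k::comm_ring_1) \<Rightarrow> ('a \<Rightarrow>\<^sub>0 'k)" where
  "counit_right W = lin (\<lambda>(a, b). smul (eps_a b) (bvec a)) W"

lemma is_linear_counit_left [linear_intros]: "is_linear f \<Longrightarrow> is_linear (\<lambda>p. counit_left (f p))"
  unfolding counit_left_def by (rule linear_intros)

lemma is_linear_counit_right [linear_intros]: "is_linear f \<Longrightarrow> is_linear (\<lambda>p. counit_right (f p))"
  unfolding counit_right_def by (rule linear_intros)

lemma counit_left_single [simp]:
  "counit_left (Poly_Mapping.single (a, b) c) = Poly_Mapping.single b (c * eps_a a)"
  by (simp add: counit_left_def)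

lemma counit_right_single [simp]:
  "counit_right (Poly_Mapping.single (a, b) c) = Poly_Mapping.single a (c * eps_a b)"
  by (simp add: counit_right_def)

lemma counit_left_add [simp]: "counit_left (p + q) = counit_left p + counit_left q"
  by (simp add: counit_left_def)

lemma counit_right_add [simp]: "counit_right (p + q) = counit_right p + counit_right q"
  by (simp add: counit_right_def)

lemma counit_left_tens: "counit_left (tens p q) = smul (lfun eps_a p) q"
proof -
  have "counit_left (tens p q) = lin (\<lambda>a. smul (eps_a a) (lin bvec q)) p"
    unfolding counit_left_def tens_def lin_lin by (simp del: smul_single add: lin_smul_fun)
  then show ?thesis
    by (simp del: smul_single add: lin_smul_const)
qed

lemma counit_right_tens: "counit_right (tens p q) = smul (lfun eps_a q) p"
proof -
  have "counit_right (tens p q) = lin (\<lambda>a. lin (\<lambda>b. smul (eps_a b) (bvec a)) q) p"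
    unfolding counit_right_def tens_def lin_lin by (simp del: smul_single)
  also have "\<dots> = lin (\<lambda>a. smul (lfun eps_a q) (bvec a)) p"
    by (simp del: smul_single add: lin_smul_const)
  finally show ?thesis
    by (simp del: smul_single add: lin_smul_fun)
qed

lemma counit_left_Bplus_right: "counit_left (Bplus_right W) = Bplus (counit_left W)"
  by (rule is_linear_eqI[where f = "\<lambda>W. counit_left (Bplus_right W)"]) (auto intro!: linear_intros)

lemma counit_right_Bplus_right: "counit_right (Bplus_right W) = 0"
  by (rule is_linear_eqI[where f = "\<lambda>W. counit_right (Bplus_right W)"]) (auto intro!: linear_intros)

lemma counit_left_primitive_coprod_dec: "counit_left (primitive_coprod (dec x)) = bvec (dec x)"
  and counit_right_primitive_coprod_dec: "counit_right (primitive_coprod (dec x)) = bvec (dec x)"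
  by (simp_all add: primitive_coprod_def)

context angular
begin

lemma lfun_eps_fprod: "lfun eps_a (fprod lam P Q) = eps_a P * eps_a Q"
proof -
  have "lfun (\<lambda>s. eps_a (One s)) (tprod lam t u) = eps_a (One t) * eps_a (One u)" for t u :: "'x tree"
    by (cases t; cases u) (simp_all add: eps_a_def)
  then show ?thesis
    by (cases P; cases Q) (simp_all add: fprod_More_left fprod_One_One fprod_One_More)
qed

lemma lfun_eps_diamond: "lfun eps_a (p \<diamond> q) = lfun eps_a p * lfun eps_a q"
  by (simp add: diam_def lfun_lin lfun_eps_fprod lfun_mult_const_left lfun_mult_const_right)

lemma counit_left_diamond2: "counit_left (U \<diamond>\<^sub>2 V) = counit_left U \<diamond> counit_left V"
proof (rule bilinear_eqI[where L = "\<lambda>U V. counit_left (U \<diamond>\<^sub>2 V)"], (intro linear_intros)+)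
  fix a c :: "'x forest \<times> 'x forest"
  show "counit_left (bvec a \<diamond>\<^sub>2 bvec c) = counit_left (bvec a) \<diamond> counit_left (bvec c)"
    by (cases a; cases c) (simp add: counit_left_tens lfun_eps_fprod)
qed

lemma counit_right_diamond2: "counit_right (U \<diamond>\<^sub>2 V) = counit_right U \<diamond> counit_right V"
proof (rule bilinear_eqI[where L = "\<lambda>U V. counit_right (U \<diamond>\<^sub>2 V)"], (intro linear_intros)+)
  fix a c :: "'x forest \<times> 'x forest"
  show "counit_right (bvec a \<diamond>\<^sub>2 bvec c) = counit_right (bvec a) \<diamond> counit_right (bvec c)"
    by (cases a; cases c) (simp add: counit_right_tens lfun_eps_fprod mult.commute)
qed

lemma counit_left_coprod: "counit_left (coprod_a lam P) = bvec P"
proof (induction "size P" arbitrary: P rule: less_induct)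
  case less
  show ?case
  proof (cases P)
    case (More t x P')
    then show ?thesis
      using less[of "One t"] less[of P']
      by (simp add: coprod_More counit_left_diamond2 counit_left_primitive_coprod_dec fprod_dec_left fprod_One_More_Dot)
  next
    case (One p)
    then show ?thesis
      using less by (cases p) (simp_all add: coprod_bul coprod_Bp counit_left_Bplus_right)
  qed
qed

lemma counit_right_coprod: "counit_right (coprod_a lam P) = bvec P"
proof (induction "size P" arbitrary: P rule: less_induct)
  case less
  show ?case
  proof (cases P)
    case (More t x P')
    then show ?thesis
      using less[of "One t"] less[of P']
      by (simp add: coprod_More counit_right_diamond2 counit_right_primitive_coprod_dec fprod_dec_left fprod_One_More_Dot)
  next
    case (One p)
    then show ?thesis
      using less by (cases p) (simp_all add: coprod_bul coprod_Bp counit_right_Bplus_right)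
  qed
qed

lemma counit_left_coprod_lin: "counit_left (lin (coprod_a lam) p) = p"
  by (rule is_linear_eqI[where f = "\<lambda>p. counit_left (lin (coprod_a lam) p)"], (intro linear_intros)+)
     (simp add: counit_left_coprod)

lemma counit_right_coprod_lin: "counit_right (lin (coprod_a lam) p) = p"
  by (rule is_linear_eqI[where f = "\<lambda>p. counit_right (lin (coprod_a lam) p)"], (intro linear_intros)+)
     (simp add: counit_right_coprod)

end


section \<open>Coassociativity\<close>

abbreviation Bplus_third :: "('a \<times> 'b \<times> 'x forest \<Rightarrow>\<^sub>0 'k::comm_ring_1) \<Rightarrow> ('a \<times> 'b \<times> 'x forest \<Rightarrow>\<^sub>0 'k)" where
  "Bplus_third W \<equiv> lin (\<lambda>(a, b, c). bvec (a, b, One (Bp c))) W"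

abbreviation Bplus_middle :: "('a \<times> 'x forest \<Rightarrow>\<^sub>0 'k::comm_ring_1) \<Rightarrow> ('a \<times> 'x forest \<times> 'x forest \<Rightarrow>\<^sub>0 'k)" where
  "Bplus_middle W \<equiv> lin (\<lambda>(a, b). bvec (a, One (Bp b), bul)) W"

lemma Bplus_third_tens: "Bplus_third (tens p W) = tens p (Bplus_right W)"
proof (rule bilinear_eqI[where L = "\<lambda>p W. Bplus_third (tens p W)"], (intro linear_intros)+)
  fix a and b :: "'b \<times> 'x forest"
  show "Bplus_third (tens (bvec a) (bvec b)) = tens (bvec a) (Bplus_right (bvec b))"
    by (cases b) simp
qed

lemma Bplus_third_tens_reassoc: "Bplus_third (tens_reassoc W q) = tens_reassoc W (Bplus q)"
proof (rule bilinear_eqI[where L = "\<lambda>W q. Bplus_third (tens_reassoc W q)"], (intro linear_intros)+)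
  fix a :: "'a \<times> 'b" and b
  show "Bplus_third (tens_reassoc (bvec a) (bvec b)) = tens_reassoc (bvec a) (Bplus (bvec b))"
    by (cases a) simp
qed

lemma tens_reassoc_Bplus_right: "tens_reassoc (Bplus_right W) (bvec bul) = Bplus_middle W"
proof (rule is_linear_eqI[where f = "\<lambda>W. tens_reassoc (Bplus_right W) (bvec bul)"], (intro linear_intros)+)
  fix a :: "'a \<times> 'x forest"
  show "tens_reassoc (Bplus_right (bvec a)) (bvec bul) = Bplus_middle (bvec a)"
    by (cases a) simp
qed

context angular
begin

abbreviation diamond3 ::
  "('x forest \<times> 'x forest \<times> 'x forest \<Rightarrow>\<^sub>0 'k) \<Rightarrow> ('x forest \<times> 'x forest \<times> 'x forest \<Rightarrow>\<^sub>0 'k)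
    \<Rightarrow> ('x forest \<times> 'x forest \<times> 'x forest \<Rightarrow>\<^sub>0 'k)"
    (infixl \<open>\<diamond>\<^sub>3\<close> 70) where
  "P \<diamond>\<^sub>3 Q \<equiv> tens_mult (diam lam) (tens_mult (diam lam) (diam lam)) P Q"

definition coprod_tens_id ::
  "('x forest \<times> 'x forest \<Rightarrow>\<^sub>0 'k) \<Rightarrow> ('x forest \<times> 'x forest \<times> 'x forest \<Rightarrow>\<^sub>0 'k)" where
  "coprod_tens_id W = lin (\<lambda>(a, b). lin (\<lambda>(a1, a2). bvec (a1, a2, b)) (coprod_a lam a)) W"

definition id_tens_coprod ::
  "('x forest \<times> 'x forest \<Rightarrow>\<^sub>0 'k) \<Rightarrow> ('x forest \<times> 'x forest \<times> 'x forest \<Rightarrow>\<^sub>0 'k)" where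
  "id_tens_coprod W = lin (\<lambda>(a, b). lin (\<lambda>(b1, b2). bvec (a, b1, b2)) (coprod_a lam b)) W"

lemma coprod_tens_id_single [simp]:
  "coprod_tens_id (Poly_Mapping.single (a, b) c) = smul c (tens_reassoc (coprod_a lam a) (bvec b))"
  by (simp add: coprod_tens_id_def tens_reassoc_bvec)

lemma id_tens_coprod_single [simp]:
  "id_tens_coprod (Poly_Mapping.single (a, b) c) = smul c (tens (bvec a) (coprod_a lam b))"
  by (simp add: id_tens_coprod_def tens_bvec_left)

lemma is_linear_coprod_tens_id [linear_intros]: "is_linear f \<Longrightarrow> is_linear (\<lambda>p. coprod_tens_id (f p))"
  unfolding coprod_tens_id_def by (rule linear_intros)

lemma is_linear_id_tens_coprod [linear_intros]: "is_linear f \<Longrightarrow> is_linear (\<lambda>p. id_tens_coprod (f p))"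
  unfolding id_tens_coprod_def by (rule linear_intros)

lemma coprod_tens_id_add [simp]: "coprod_tens_id (p + q) = coprod_tens_id p + coprod_tens_id q"
  by (simp add: coprod_tens_id_def)

lemma id_tens_coprod_add [simp]: "id_tens_coprod (p + q) = id_tens_coprod p + id_tens_coprod q"
  by (simp add: id_tens_coprod_def)

lemma coprod_tens_id_tens: "coprod_tens_id (tens p q) = tens_reassoc (lin (coprod_a lam) p) q"
  by (rule bilinear_eqI[where L = "\<lambda>p q. coprod_tens_id (tens p q)"], (intro linear_intros)+) simp

lemma id_tens_coprod_tens: "id_tens_coprod (tens p q) = tens p (lin (coprod_a lam) q)"
  by (rule bilinear_eqI[where L = "\<lambda>p q. id_tens_coprod (tens p q)"], (intro linear_intros)+) simp

lemma tens_reassoc_diamond2: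
  fixes q1 q2 :: "'x forest \<Rightarrow>\<^sub>0 'k"
  shows "tens_reassoc (W1 \<diamond>\<^sub>2 W2) (q1 \<diamond> q2) = tens_reassoc W1 q1 \<diamond>\<^sub>3 tens_reassoc W2 q2"
proof (rule bilinear_eqI[where L = "\<lambda>W1 W2. tens_reassoc (W1 \<diamond>\<^sub>2 W2) (q1 \<diamond> q2)"], (intro linear_intros)+)
  fix w1 w2 :: "'x forest \<times> 'x forest"
  show "tens_reassoc (bvec w1 \<diamond>\<^sub>2 bvec w2) (q1 \<diamond> q2)
      = tens_reassoc (bvec w1) q1 \<diamond>\<^sub>3 tens_reassoc (bvec w2) q2"
  proof (rule bilinear_eqI[where L = "\<lambda>q1 q2. tens_reassoc (bvec w1 \<diamond>\<^sub>2 bvec w2) (q1 \<diamond> q2)"],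
      (intro linear_intros)+)
    fix b d :: "'x forest"
    show "tens_reassoc (bvec w1 \<diamond>\<^sub>2 bvec w2) (bvec b \<diamond> bvec d)
        = tens_reassoc (bvec w1) (bvec b) \<diamond>\<^sub>3 tens_reassoc (bvec w2) (bvec d)"
      by (cases w1; cases w2) (simp add: tens_reassoc_tens)
  qed
qed

lemma coprod_tens_id_diamond2: "coprod_tens_id (U \<diamond>\<^sub>2 V) = coprod_tens_id U \<diamond>\<^sub>3 coprod_tens_id V"
proof (rule bilinear_eqI[where L = "\<lambda>U V. coprod_tens_id (U \<diamond>\<^sub>2 V)"], (intro linear_intros)+)
  fix a c :: "'x forest \<times> 'x forest"
  show "coprod_tens_id (bvec a \<diamond>\<^sub>2 bvec c) = coprod_tens_id (bvec a) \<diamond>\<^sub>3 coprod_tens_id (bvec c)"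
    by (cases a; cases c) (simp add: coprod_tens_id_tens coprod_fprod flip: tens_reassoc_diamond2)
qed

lemma id_tens_coprod_diamond2: "id_tens_coprod (U \<diamond>\<^sub>2 V) = id_tens_coprod U \<diamond>\<^sub>3 id_tens_coprod V"
proof (rule bilinear_eqI[where L = "\<lambda>U V. id_tens_coprod (U \<diamond>\<^sub>2 V)"], (intro linear_intros)+)
  fix a c :: "'x forest \<times> 'x forest"
  show "id_tens_coprod (bvec a \<diamond>\<^sub>2 bvec c) = id_tens_coprod (bvec a) \<diamond>\<^sub>3 id_tens_coprod (bvec c)"
    by (cases a; cases c)
       (simp add: id_tens_coprod_tens coprod_fprod tens_mult_tens[OF is_bilinear_diamond is_bilinear_tens_mult])
qed

lemma coprod_tens_id_Bplus_right: "coprod_tens_id (Bplus_right W) = Bplus_third (coprod_tens_id W)"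
proof (rule is_linear_eqI[where f = "\<lambda>W. coprod_tens_id (Bplus_right W)"], (intro linear_intros)+)
  fix a :: "'x forest \<times> 'x forest"
  show "coprod_tens_id (Bplus_right (bvec a)) = Bplus_third (coprod_tens_id (bvec a))"
    by (cases a) (simp add: Bplus_third_tens_reassoc)
qed

lemma id_tens_coprod_Bplus_right:
  "id_tens_coprod (Bplus_right W) = Bplus_middle W + Bplus_third (id_tens_coprod W)"
proof (rule is_linear_eqI[where f = "\<lambda>W. id_tens_coprod (Bplus_right W)"], (intro linear_intros)+)
  fix a :: "'x forest \<times> 'x forest"
  show "id_tens_coprod (Bplus_right (bvec a)) = Bplus_middle (bvec a) + Bplus_third (id_tens_coprod (bvec a))"
    by (cases a) (simp add: Bplus_third_tens coprod_Bp)
qed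

lemma coprod_tens_id_primitive_coprod_dec:
  "coprod_tens_id (primitive_coprod (dec x)) = id_tens_coprod (primitive_coprod (dec x))"
  by (simp add: primitive_coprod_def coprod_dec coprod_bul add_ac)

lemma coprod_tens_id_coprod: "coprod_tens_id (coprod_a lam P) = id_tens_coprod (coprod_a lam P)"
proof (induction "size P" arbitrary: P rule: less_induct)
  case less
  show ?case
  proof (cases P)
    case (More t x P')
    then show ?thesis
      using less[of "One t"] less[of P']
      by (simp add: coprod_More coprod_tens_id_diamond2 id_tens_coprod_diamond2
          coprod_tens_id_primitive_coprod_dec)
  next
    case (One p)
    show ?thesis
    proof (cases p)
      case Dot
      then show ?thesis
        using One by (simp add: coprod_bul)
    next
      case (Bp F)
      have "coprod_tens_id (coprod_a lam P)
          = tens_reassoc (bvec (P, bul)) (bvec bul) + Bplus_middle (coprod_a lam F)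
            + Bplus_third (coprod_tens_id (coprod_a lam F))"
        using One Bp by (simp add: coprod_Bp coprod_tens_id_Bplus_right tens_reassoc_Bplus_right)
      also have "\<dots> = id_tens_coprod (coprod_a lam P)"
        using One Bp less[of F] by (simp add: coprod_Bp id_tens_coprod_Bplus_right coprod_bul)
      finally show ?thesis .
    qed
  qed
qed

lemma coprod_tens_id_coprod_lin:
  "coprod_tens_id (lin (coprod_a lam) p) = id_tens_coprod (lin (coprod_a lam) p)"
  by (rule is_linear_eqI[where f = "\<lambda>p. coprod_tens_id (lin (coprod_a lam) p)"], (intro linear_intros)+)
     (simp add: coprod_tens_id_coprod)

end

theorem mainTheorem2:
  fixes lam :: "'k::comm_ring_1"
  shows "bialgebra (fprod lam :: 'x forest \<Rightarrow> 'x forest \<Rightarrow> ('x forest \<Rightarrow>\<^sub>0 'k))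
           (Poly_Mapping.single bul 1) (coprod_a lam) eps_a"
proof -
  interpret angular lam .
  note coassociative = coprod_tens_id_coprod_lin[unfolded coprod_tens_id_def id_tens_coprod_def]
  note counital = counit_left_coprod_lin[unfolded counit_left_def]
    counit_right_coprod_lin[unfolded counit_right_def]
  show ?thesis
    unfolding bialgebra_def Let_def
    \<comment> \<open>smul_single is disabled so that the counit maps keep the shape used in counital\<close>
    by (fold diam_def, fold tens_mult_def)
       (simp del: smul_single
         add: diamond_assoc coprod_lin_diamond lfun_eps_diamond coprod_bul coassociative counital)
qed

end
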